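(* Let $\mathbb{C}$ be a locally small category and $\mathbb{C}_{\mathit{fin}}$ a full subcategory satisfying (C1)–(C5) below. Let $F\in\mathrm{Ob}(\mathbb{C})$ be locally finite and let $U:\mathbb{C}^*\to\mathbb{C}$ be a reasonable precompact expansion with unique restrictions which separates points. Then (a) $\mathcal{S}_F=\{N(e,\mathcal{A}):U(\mathcal{A})\in\mathrm{Ob}(\mathbb{C}_{\mathit{fin}}),\ e\in\hom(U(\mathcal{A}),F)\}$ is a base consisting of clopen sets of a topology $\sigma_F$ on $U^{-1}(F)$; and (b) $U^{-1}(F)$ with the topology $\sigma_F$ is a Hausdorff space.
   Context: Write $A\to B$ if $\hom(A,B)\ne\varnothing$. Conditions: (C1) all morphisms of $\mathbb{C}$ are monomorphisms; (C2) $\mathrm{Ob}(\mathbb{C}_{\mathit{fin}})$ is a set; (C3) $\hom(A,B)$ is finite for $A,B\in\mathrm{Ob}(\mathbb{C}_{\mathit{fin}})$; (C4) for every $F\in\mathrm{Ob}(\mathbb{C})$ there is $A\in\mathrm{Ob}(\mathbb{C}_{\mathit{fin}})$ with $A\to F$; (C5) for every $B\in\mathrm{Ob}(\mathbb{C}_{\mathit{fin}})$ the set $\{A\in\mathrm{Ob}(\mathbb{C}_{\mathit{fin}}):A\to B\}$ is finite. $F$ is locally finite if for all $A,B\in\mathrm{Ob}(\mathbb{C}_{\mathit{fin}})$, $e\in\hom(A,F)$, $f\in\hom(B,F)$ there exist $D\in\mathrm{Ob}(\mathbb{C}_{\mathit{fin}})$, $r\in\hom(D,F)$, $p\in\hom(A,D)$,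 $q\in\hom(B,D)$ with $r\cdot p=e$, $r\cdot q=f$, such that for every $H\in\mathrm{Ob}(\mathbb{C})$, $r'\in\hom(H,F)$, $p'\in\hom(A,H)$, $q'\in\hom(B,H)$ with $r'\cdot p'=e$, $r'\cdot q'=f$ there is $s\in\hom(D,H)$ with $r'\cdot s=r$, $s\cdot p=p'$, $s\cdot q=q'$. An expansion of $\mathbb{C}$ is a locally small category $\mathbb{C}^*$ with a functor $U:\mathbb{C}^*\to\mathbb{C}$ surjective on objects and injective on hom-sets; we regard $\hom_{\mathbb{C}^*}(\mathcal{A},\mathcal{B})\subseteq\hom_{\mathbb{C}}(U\mathcal{A},U\mathcal{B})$, and $U^{-1}(A)=\{\mathcal{A}:U(\mathcal{A})=A\}$. $U$ is reasonable if for every $e\in\hom(A,B)$ and $\mathcal{A}\in U^{-1}(A)$ there is $\mathcal{B}\in U^{-1}(B)$ with $e\in\hom(\mathcal{A},\mathcal{B})$; it has unique restrictions if for every $\mathcal{B}\in\mathrm{Ob}(\mathbb{C}^* )$ and $e\in\hom(A,U(\mathcal{B}))$ there is exactly one $\mathcal{A}\in U^{-1}(A)$ with $e\in\hom(\mathcal{A},\mathcal{B})$, denoted $\mathcal{B}|_e$; it is precompact if $U^{-1}(A)$ is a set for every $A\in\mathrm{Ob}(\mathbb{C})$ and finite for $A\in\mathrm{Ob}(\mathbb{C}_{\mathit{fin}})$; it separates points if for every $F\in\mathrm{Ob}(\mathbb{C})$ and all distinct $\mathcal{F}_1,\mathcal{F}_2\in U^{-1}(F)$ there are $A\in\mathrm{Ob}(\mathbb{C}_{\mathit{fin}})$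 and $e\in\hom(A,F)$ with $\mathcal{F}_1|_e\ne\mathcal{F}_2|_e$. For $e\in\hom(A,F)$ and $\mathcal{A}\in U^{-1}(A)$, $N(e,\mathcal{A})=\{\mathcal{F}\in U^{-1}(F):e\in\hom(\mathcal{A},\mathcal{F})\}$. *)

theory Defs
  imports "HOL-Analysis.Analysis"
begin

text \<open>A (locally small) category: objects Ob, hom-sets hom A B, composition
  cmp g f (read g \<cdot> f, first f then g), identities idm.\<close>
definition category :: "'o set \<Rightarrow> ('o \<Rightarrow> 'o \<Rightarrow> 'm set) \<Rightarrow> ('m \<Rightarrow> 'm \<Rightarrow> 'm) \<Rightarrow> ('o \<Rightarrow> 'm) \<Rightarrow> bool" where
  "category Ob hom cmp idm \<longleftrightarrow>
     (\<forall>A B. (A \<notin> Ob \<or> B \<notin> Ob) \<longrightarrow> hom A B = {}) \<and>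
     (\<forall>A\<in>Ob. idm A \<in> hom A A) \<and>
     (\<forall>A B C f g. f \<in> hom A B \<and> g \<in> hom B C \<longrightarrow> cmp g f \<in> hom A C) \<and>
     (\<forall>A B C D f g h. f \<in> hom A B \<and> g \<in> hom B C \<and> h \<in> hom C D \<longrightarrow>
        cmp h (cmp g f) = cmp (cmp h g) f) \<and>
     (\<forall>A B f. f \<in> hom A B \<longrightarrow> cmp (idm B) f = f \<and> cmp f (idm A) = f)"

definition monomorphism :: "'o set \<Rightarrow> ('o \<Rightarrow> 'o \<Rightarrow> 'm set) \<Rightarrow> ('m \<Rightarrow> 'm \<Rightarrow> 'm) \<Rightarrow> 'o \<Rightarrow> 'o \<Rightarrow> 'm \<Rightarrow> bool" where
  "monomorphism Ob hom cmp A B f \<longleftrightarrow> f \<in> hom A B \<and>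
     (\<forall>C\<in>Ob. \<forall>g\<in>hom C A. \<forall>h\<in>hom C A. cmp f g = cmp f h \<longrightarrow> g = h)"

text \<open>Conditions (C1)-(C5) for a full subcategory with object set Obfin.
  (C2) (Ob(C_fin) is a set) holds automatically in HOL.\<close>
definition fin_conditions :: "'o set \<Rightarrow> ('o \<Rightarrow> 'o \<Rightarrow> 'm set) \<Rightarrow> ('m \<Rightarrow> 'm \<Rightarrow> 'm) \<Rightarrow> 'o set \<Rightarrow> bool" where
  "fin_conditions Ob hom cmp Obfin \<longleftrightarrow>
     Obfin \<subseteq> Ob \<and>
     (\<forall>A\<in>Ob. \<forall>B\<in>Ob. \<forall>f\<in>hom A B. monomorphism Ob hom cmp A B f) \<and>
     (\<forall>A\<in>Obfin. \<forall>B\<in>Obfin. finite (hom A B)) \<and>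
     (\<forall>F\<in>Ob. \<exists>A\<in>Obfin. hom A F \<noteq> {}) \<and>
     (\<forall>B\<in>Obfin. finite {A\<in>Obfin. hom A B \<noteq> {}})"

definition locally_finite :: "'o set \<Rightarrow> ('o \<Rightarrow> 'o \<Rightarrow> 'm set) \<Rightarrow> ('m \<Rightarrow> 'm \<Rightarrow> 'm) \<Rightarrow> 'o set \<Rightarrow> 'o \<Rightarrow> bool" where
  "locally_finite Ob hom cmp Obfin F \<longleftrightarrow>
     (\<forall>A\<in>Obfin. \<forall>B\<in>Obfin. \<forall>e\<in>hom A F. \<forall>f\<in>hom B F.
        \<exists>D\<in>Obfin. \<exists>r\<in>hom D F. \<exists>p\<in>hom A D. \<exists>q\<in>hom B D.
          cmp r p = e \<and> cmp r q = f \<and>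
          (\<forall>H\<in>Ob. \<forall>r'\<in>hom H F. \<forall>p'\<in>hom A H. \<forall>q'\<in>hom B H.
             cmp r' p' = e \<and> cmp r' q' = f \<longrightarrow>
             (\<exists>s\<in>hom D H. cmp r' s = r \<and> cmp s p = p' \<and> cmp s q = q')))"

text \<open>Morphisms of C* are identified with their
  U-images (hom* A B \<subseteq> hom (U A) (U B)), so U is injective on hom-sets;
  C* uses the composition of C and identities idm (U A), which makes U a functor.\<close>
definition expansion :: "'o set \<Rightarrow> ('o \<Rightarrow> 'o \<Rightarrow> 'm set) \<Rightarrow> ('m \<Rightarrow> 'm \<Rightarrow> 'm) \<Rightarrow> ('o \<Rightarrow> 'm)
    \<Rightarrow> 'p set \<Rightarrow> ('p \<Rightarrow> 'p \<Rightarrow> 'm set) \<Rightarrow> ('p \<Rightarrow> 'o) \<Rightarrow> bool" where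
  "expansion Ob hom cmp idm Obs homs U \<longleftrightarrow>
     category Obs homs cmp (\<lambda>\<A>. idm (U \<A>)) \<and>
     U ` Obs = Ob \<and>
     (\<forall>\<A> \<B>. homs \<A> \<B> \<subseteq> hom (U \<A>) (U \<B>))"

definition fibre :: "'p set \<Rightarrow> ('p \<Rightarrow> 'o) \<Rightarrow> 'o \<Rightarrow> 'p set" where
  "fibre Obs U A = {\<A>\<in>Obs. U \<A> = A}"

definition reasonable :: "('o \<Rightarrow> 'o \<Rightarrow> 'm set) \<Rightarrow> 'p set \<Rightarrow> ('p \<Rightarrow> 'p \<Rightarrow> 'm set) \<Rightarrow> ('p \<Rightarrow> 'o) \<Rightarrow> bool" where
  "reasonable hom Obs homs U \<longleftrightarrow>
     (\<forall>A B e \<A>. e \<in> hom A B \<and> \<A> \<in> fibre Obs U A \<longrightarrow> (\<exists>\<B>\<in>fibre Obs U B. e \<in> homs \<A> \<B>))"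

definition unique_restrictions :: "('o \<Rightarrow> 'o \<Rightarrow> 'm set) \<Rightarrow> 'p set \<Rightarrow> ('p \<Rightarrow> 'p \<Rightarrow> 'm set) \<Rightarrow> ('p \<Rightarrow> 'o) \<Rightarrow> bool" where
  "unique_restrictions hom Obs homs U \<longleftrightarrow>
     (\<forall>\<B>\<in>Obs. \<forall>A e. e \<in> hom A (U \<B>) \<longrightarrow> (\<exists>!\<A>. \<A> \<in> fibre Obs U A \<and> e \<in> homs \<A> \<B>))"

text \<open>The restriction \<B>|_e (meaningful under unique restrictions).\<close>
definition restr :: "'p set \<Rightarrow> ('p \<Rightarrow> 'p \<Rightarrow> 'm set) \<Rightarrow> ('p \<Rightarrow> 'o) \<Rightarrow> 'o \<Rightarrow> 'p \<Rightarrow> 'm \<Rightarrow> 'p" where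
  "restr Obs homs U A \<B> e = (THE \<A>. \<A> \<in> fibre Obs U A \<and> e \<in> homs \<A> \<B>)"

text \<open>Precompact: fibres over finite objects are finite (fibres are sets automatically).\<close>
definition precompact :: "'o set \<Rightarrow> 'p set \<Rightarrow> ('p \<Rightarrow> 'o) \<Rightarrow> bool" where
  "precompact Obfin Obs U \<longleftrightarrow> (\<forall>A\<in>Obfin. finite (fibre Obs U A))"

definition separates_points :: "'o set \<Rightarrow> ('o \<Rightarrow> 'o \<Rightarrow> 'm set) \<Rightarrow> 'o set \<Rightarrow> 'p set \<Rightarrow> ('p \<Rightarrow> 'p \<Rightarrow> 'm set) \<Rightarrow> ('p \<Rightarrow> 'o) \<Rightarrow> bool" where
  "separates_points Ob hom Obfin Obs homs U \<longleftrightarrow>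
     (\<forall>F\<in>Ob. \<forall>\<F>1\<in>fibre Obs U F. \<forall>\<F>2\<in>fibre Obs U F. \<F>1 \<noteq> \<F>2 \<longrightarrow>
        (\<exists>A\<in>Obfin. \<exists>e\<in>hom A F. restr Obs homs U A \<F>1 e \<noteq> restr Obs homs U A \<F>2 e))"

definition Nbhd :: "'p set \<Rightarrow> ('p \<Rightarrow> 'p \<Rightarrow> 'm set) \<Rightarrow> ('p \<Rightarrow> 'o) \<Rightarrow> 'o \<Rightarrow> 'm \<Rightarrow> 'p \<Rightarrow> 'p set" where
  "Nbhd Obs homs U F e \<A> = {\<F>\<in>fibre Obs U F. e \<in> homs \<A> \<F>}"

definition S_fam :: "('o \<Rightarrow> 'o \<Rightarrow> 'm set) \<Rightarrow> 'o set \<Rightarrow> 'p set \<Rightarrow> ('p \<Rightarrow> 'p \<Rightarrow> 'm set) \<Rightarrow> ('p \<Rightarrow> 'o) \<Rightarrow> 'o \<Rightarrow> 'p set set" where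
  "S_fam hom Obfin Obs homs U F =
     {Nbhd Obs homs U F e \<A> | \<A> e. \<A> \<in> Obs \<and> U \<A> \<in> Obfin \<and> e \<in> hom (U \<A>) F}"

end

theory Submission
  imports Defs
begin

text \<open>For a fixed \<open>e : A \<rightarrow> F\<close> the sets \<open>N(e,\<A>)\<close>, \<open>\<A> \<in> U\<^sup>-\<^sup>1(A)\<close>, partition \<open>U\<^sup>-\<^sup>1(F)\<close>:
  by unique restrictions, \<open>\<F>\<close> lies in \<open>N(e,\<F>|\<^sub>e)\<close> and in no other of them. Hence each basic set
  is clopen, its complement being the union of the others, and separation of points yields
  disjoint basic neighbourhoods \<open>N(e,\<F>\<^sub>1|\<^sub>e)\<close>, \<open>N(e,\<F>\<^sub>2|\<^sub>e)\<close>. That \<open>S\<^sub>F\<close> is a base comes from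
  amalgamation in \<open>\<C>\<^sub>f\<^sub>i\<^sub>n\<close>: if \<open>\<F> \<in> N(e,\<A>) \<inter> N(f,\<B>)\<close> and \<open>e = r \<cdot> p\<close>, \<open>f = r \<cdot> q\<close>, then \<open>p\<close> and
  \<open>q\<close> lift to morphisms \<open>\<A> \<rightarrow> \<F>|\<^sub>r\<close> and \<open>\<B> \<rightarrow> \<F>|\<^sub>r\<close>, so \<open>\<F> \<in> N(r,\<F>|\<^sub>r) \<subseteq> N(e,\<A>) \<inter> N(f,\<B>)\<close>;
  (C4) makes \<open>S\<^sub>F\<close> cover the fibre.\<close>

definition is_topology_base :: "'a set set \<Rightarrow> bool" where
  "is_topology_base \<S> \<longleftrightarrow> (\<forall>X\<in>\<S>. \<forall>Y\<in>\<S>. \<forall>x\<in>X \<inter> Y. \<exists>Z\<in>\<S>. x \<in> Z \<and> Z \<subseteq> X \<inter> Y)"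

definition base_topology :: "'a set set \<Rightarrow> 'a topology" where
  "base_topology \<S> = topology (arbitrary union_of (\<lambda>X. X \<in> \<S>))"

lemma
  assumes "is_topology_base \<S>"
  shows openin_base_topology: "openin (base_topology \<S>) V \<longleftrightarrow> (\<exists>\<U>. \<U> \<subseteq> \<S> \<and> V = \<Union>\<U>)"
    and topspace_base_topology: "topspace (base_topology \<S>) = \<Union>\<S>"
proof -
  have "istopology (arbitrary union_of (\<lambda>X. X \<in> \<S>))"
    using assms unfolding is_topology_base_def istopology_base_eq arbitrary_union_of_alt by blast
  then have "openin (base_topology \<S>) = arbitrary union_of (\<lambda>X. X \<in> \<S>)"
    unfolding base_topology_def by (rule topology_inverse')
  then show open_iff: "openin (base_topology \<S>) V \<longleftrightarrow> (\<exists>\<U>. \<U> \<subseteq> \<S> \<and> V = \<Union>\<U>)" for V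
    by (auto simp: union_of_def arbitrary_def)
  have "\<Union>{V. \<exists>\<U>. \<U> \<subseteq> \<S> \<and> V = \<Union>\<U>} = \<Union>\<S>"
    by blast
  then show "topspace (base_topology \<S>) = \<Union>\<S>"
    unfolding topspace_def open_iff .
qed

lemma openin_base_topology_member:
  assumes "is_topology_base \<S>" "X \<in> \<S>"
  shows "openin (base_topology \<S>) X"
proof -
  have "{X} \<subseteq> \<S>" "X = \<Union>{X}"
    using assms(2) by auto
  then show ?thesis
    using openin_base_topology[OF assms(1)] by blast
qed

lemma Hausdorff_space_base_topology:
  assumes "is_topology_base \<S>"
    and "\<And>x y. x \<in> \<Union>\<S> \<Longrightarrow> y \<in> \<Union>\<S> \<Longrightarrow> x \<noteq> y \<Longrightarrow> \<exists>X\<in>\<S>. \<exists>Y\<in>\<S>. x \<in> X \<and> y \<in> Y \<and> disjnt X Y"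
  shows "Hausdorff_space (base_topology \<S>)"
proof -
  have "\<exists>V W. openin (base_topology \<S>) V \<and> openin (base_topology \<S>) W \<and> x \<in> V \<and> y \<in> W \<and> disjnt V W"
    if xy: "x \<in> \<Union>\<S>" "y \<in> \<Union>\<S>" "x \<noteq> y" for x y
  proof -
    obtain X Y where "X \<in> \<S>" "Y \<in> \<S>" "x \<in> X" "y \<in> Y" "disjnt X Y"
      using assms(2)[OF xy] by blast
    then show ?thesis
      using openin_base_topology_member[OF assms(1)] by blast
  qed
  then show ?thesis
    unfolding Hausdorff_space_def topspace_base_topology[OF assms(1)] by blast
qed

locale expansion_with_restrictions =
  fixes Ob :: "'o set" and hom :: "'o \<Rightarrow> 'o \<Rightarrow> 'm set" and cmp :: "'m \<Rightarrow> 'm \<Rightarrow> 'm"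
    and idm :: "'o \<Rightarrow> 'm" and Obs :: "'p set" and homs :: "'p \<Rightarrow> 'p \<Rightarrow> 'm set" and U :: "'p \<Rightarrow> 'o"
  assumes expansion: "expansion Ob hom cmp idm Obs homs U"
    and unique_restr: "unique_restrictions hom Obs homs U"
begin

abbreviation fib :: "'o \<Rightarrow> 'p set" where "fib \<equiv> fibre Obs U"
abbreviation res :: "'o \<Rightarrow> 'p \<Rightarrow> 'm \<Rightarrow> 'p" where "res \<equiv> restr Obs homs U"
abbreviation N :: "'o \<Rightarrow> 'm \<Rightarrow> 'p \<Rightarrow> 'p set" where "N \<equiv> Nbhd Obs homs U"

lemma homs_subset_hom: "homs \<A> \<B> \<subseteq> hom (U \<A>) (U \<B>)"
  using expansion unfolding expansion_def by blast

lemma homs_comp: "f \<in> homs \<A> \<B> \<Longrightarrow> g \<in> homs \<B> \<C> \<Longrightarrow> cmp g f \<in> homs \<A> \<C>"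
  using expansion unfolding expansion_def category_def by blast

lemma homs_objects: "f \<in> homs \<A> \<B> \<Longrightarrow> \<A> \<in> Obs \<and> \<B> \<in> Obs"
  using expansion unfolding expansion_def category_def by (metis empty_iff)

lemma restr_hom:
  assumes "\<B> \<in> Obs" "e \<in> hom A (U \<B>)"
  shows "res A \<B> e \<in> fib A" "e \<in> homs (res A \<B> e) \<B>"
proof -
  have "\<exists>!\<A>. \<A> \<in> fib A \<and> e \<in> homs \<A> \<B>"
    using unique_restr assms unfolding unique_restrictions_def by blast
  from theI'[OF this] show "res A \<B> e \<in> fib A" "e \<in> homs (res A \<B> e) \<B>"
    unfolding restr_def by auto
qed

lemma restr_eqI:
  assumes "e \<in> homs \<A> \<B>"
  shows "res (U \<A>) \<B> e = \<A>"
proof -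
  have "\<A> \<in> fib (U \<A>)" "\<B> \<in> Obs"
    using homs_objects[OF assms] unfolding fibre_def by auto
  moreover have "e \<in> hom (U \<A>) (U \<B>)"
    using assms homs_subset_hom by blast
  ultimately show ?thesis
    using unique_restr assms restr_hom unfolding unique_restrictions_def by metis
qed

text \<open>Both \<open>\<A>\<close> and the restriction of \<open>\<D>\<close> along \<open>p\<close> are restrictions of \<open>\<F>\<close> along \<open>r \<cdot> p\<close>.\<close>

lemma homs_factor:
  assumes "r \<in> homs \<D> \<F>" "cmp r p \<in> homs \<A> \<F>" "p \<in> hom (U \<A>) (U \<D>)"
  shows "p \<in> homs \<A> \<D>"
proof -
  define \<A>' where "\<A>' = res (U \<A>) \<D> p"
  have "\<A>' \<in> fib (U \<A>)" "p \<in> homs \<A>' \<D>"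
    using restr_hom homs_objects assms unfolding \<A>'_def by auto
  moreover have "\<A>' = \<A>"
    using restr_eqI[OF assms(2)] restr_eqI[OF homs_comp[OF \<open>p \<in> homs \<A>' \<D>\<close> assms(1)]]
      \<open>\<A>' \<in> fib (U \<A>)\<close> unfolding fibre_def by simp
  ultimately show ?thesis by simp
qed

lemma mem_Nbhd_restr:
  assumes "\<F> \<in> fib F" "e \<in> hom A F"
  shows "res A \<F> e \<in> fib A" "\<F> \<in> N F e (res A \<F> e)"
  using assms restr_hom[of \<F> e A] unfolding fibre_def Nbhd_def by auto

lemma Nbhd_disjoint:
  assumes "U \<A>1 = U \<A>2" "\<A>1 \<noteq> \<A>2"
  shows "N F e \<A>1 \<inter> N F e \<A>2 = {}"
proof (rule equals0I)
  fix \<F> assume "\<F> \<in> N F e \<A>1 \<inter> N F e \<A>2"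
  then have "e \<in> homs \<A>1 \<F>" "e \<in> homs \<A>2 \<F>"
    unfolding Nbhd_def by auto
  then have "\<A>1 = \<A>2"
    using restr_eqI assms(1) by metis
  with assms(2) show False ..
qed

lemma fibre_diff_Nbhd:
  assumes "e \<in> hom (U \<A>) F"
  shows "fib F - N F e \<A> = \<Union>{N F e \<A>' |\<A>'. \<A>' \<in> fib (U \<A>) \<and> \<A>' \<noteq> \<A>}"
proof (intro equalityI subsetI)
  fix \<F> assume \<F>: "\<F> \<in> fib F - N F e \<A>"
  then have "res (U \<A>) \<F> e \<in> fib (U \<A>)" and \<F>_in: "\<F> \<in> N F e (res (U \<A>) \<F> e)"
    using mem_Nbhd_restr assms by auto
  moreover have "res (U \<A>) \<F> e \<noteq> \<A>"
    using \<F> \<F>_in by auto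
  ultimately show "\<F> \<in> \<Union>{N F e \<A>' |\<A>'. \<A>' \<in> fib (U \<A>) \<and> \<A>' \<noteq> \<A>}"
    by blast
next
  fix \<F> assume "\<F> \<in> \<Union>{N F e \<A>' |\<A>'. \<A>' \<in> fib (U \<A>) \<and> \<A>' \<noteq> \<A>}"
  then obtain \<A>' where "\<A>' \<in> fib (U \<A>)" "\<A>' \<noteq> \<A>" "\<F> \<in> N F e \<A>'" by blast
  with Nbhd_disjoint[of \<A>' \<A>] show "\<F> \<in> fib F - N F e \<A>"
    unfolding fibre_def Nbhd_def by auto
qed

lemma Nbhd_comp_subset:
  assumes "p \<in> homs \<A> \<D>"
  shows "N F r \<D> \<subseteq> N F (cmp r p) \<A>"
  using homs_comp[OF assms] unfolding Nbhd_def by blast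

lemma S_fam_subset_fibre: "X \<in> S_fam hom Obfin Obs homs U F \<Longrightarrow> X \<subseteq> fib F"
  unfolding S_fam_def Nbhd_def by blast

lemma Nbhd_in_S_fam:
  "\<A> \<in> fib A \<Longrightarrow> A \<in> Obfin \<Longrightarrow> e \<in> hom A F \<Longrightarrow> N F e \<A> \<in> S_fam hom Obfin Obs homs U F"
  unfolding S_fam_def fibre_def by blast

lemma Union_S_fam:
  assumes "fin_conditions Ob hom cmp Obfin" "F \<in> Ob"
  shows "\<Union>(S_fam hom Obfin Obs homs U F) = fib F"
proof (intro equalityI subsetI)
  fix \<F> assume "\<F> \<in> fib F"
  obtain A e where "A \<in> Obfin" "e \<in> hom A F"
    using assms unfolding fin_conditions_def by blast
  with mem_Nbhd_restr[OF \<open>\<F> \<in> fib F\<close>] Nbhd_in_S_fam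
  show "\<F> \<in> \<Union>(S_fam hom Obfin Obs homs U F)" by blast
qed (use S_fam_subset_fibre in blast)

lemma is_topology_base_S_fam:
  assumes "locally_finite Ob hom cmp Obfin F"
  shows "is_topology_base (S_fam hom Obfin Obs homs U F)"
  unfolding is_topology_base_def
proof (intro ballI)
  fix X Y \<F>
  assume X_in: "X \<in> S_fam hom Obfin Obs homs U F" and Y_in: "Y \<in> S_fam hom Obfin Obs homs U F"
    and \<F>_in: "\<F> \<in> X \<inter> Y"
  obtain \<A> e where X: "X = N F e \<A>" "\<A> \<in> Obs" "U \<A> \<in> Obfin" "e \<in> hom (U \<A>) F"
    using X_in unfolding S_fam_def by blast
  obtain \<B> f where Y: "Y = N F f \<B>" "\<B> \<in> Obs" "U \<B> \<in> Obfin" "f \<in> hom (U \<B>) F"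
    using Y_in unfolding S_fam_def by blast
  obtain D r p q where D: "D \<in> Obfin" "r \<in> hom D F" "p \<in> hom (U \<A>) D" "q \<in> hom (U \<B>) D"
      "cmp r p = e" "cmp r q = f"
    using assms[unfolded locally_finite_def, rule_format, OF X(3) Y(3) X(4) Y(4)] by blast
  have \<F>: "\<F> \<in> fib F" "e \<in> homs \<A> \<F>" "f \<in> homs \<B> \<F>"
    using \<F>_in X Y unfolding Nbhd_def by auto
  define \<D> where "\<D> = res D \<F> r"
  have \<D>: "\<D> \<in> fib D" "\<F> \<in> N F r \<D>"
    using mem_Nbhd_restr[OF \<F>(1) D(2)] unfolding \<D>_def by auto
  then have "r \<in> homs \<D> \<F>"
    unfolding Nbhd_def by blast
  moreover have "U \<D> = D"
    using \<D>(1) unfolding fibre_def by simp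
  ultimately have "p \<in> homs \<A> \<D>" "q \<in> homs \<B> \<D>"
    using homs_factor[of r \<D> \<F>] D(3-6) \<F>(2,3) by auto
  then have "N F r \<D> \<subseteq> X \<inter> Y"
    using Nbhd_comp_subset[of p \<A> \<D> F r] Nbhd_comp_subset[of q \<B> \<D> F r] X(1) Y(1) D(5,6)
    by blast
  moreover have "N F r \<D> \<in> S_fam hom Obfin Obs homs U F"
    using Nbhd_in_S_fam \<D>(1) D(1,2) .
  ultimately show "\<exists>Z\<in>S_fam hom Obfin Obs homs U F. \<F> \<in> Z \<and> Z \<subseteq> X \<inter> Y"
    using \<D>(2) by blast
qed

lemma S_fam_separates:
  assumes "separates_points Ob hom Obfin Obs homs U" "F \<in> Ob"
    and "\<F>1 \<in> fib F" "\<F>2 \<in> fib F" "\<F>1 \<noteq> \<F>2"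
  shows "\<exists>X\<in>S_fam hom Obfin Obs homs U F. \<exists>Y\<in>S_fam hom Obfin Obs homs U F.
           \<F>1 \<in> X \<and> \<F>2 \<in> Y \<and> disjnt X Y"
proof -
  obtain A e where A: "A \<in> Obfin" "e \<in> hom A F" "res A \<F>1 e \<noteq> res A \<F>2 e"
    using assms unfolding separates_points_def by blast
  note \<F>1 = mem_Nbhd_restr[OF assms(3) A(2)] and \<F>2 = mem_Nbhd_restr[OF assms(4) A(2)]
  have "U (res A \<F>1 e) = U (res A \<F>2 e)"
    using \<F>1(1) \<F>2(1) unfolding fibre_def by simp
  then have "disjnt (N F e (res A \<F>1 e)) (N F e (res A \<F>2 e))"
    using Nbhd_disjoint A(3) unfolding disjnt_def by blast
  moreover have "N F e (res A \<F>1 e) \<in> S_fam hom Obfin Obs homs U F"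
    and "N F e (res A \<F>2 e) \<in> S_fam hom Obfin Obs homs U F"
    using Nbhd_in_S_fam \<F>1(1) \<F>2(1) A(1,2) by blast+
  ultimately show ?thesis
    using \<F>1(2) \<F>2(2) by blast
qed

lemma fibre_diff_S_fam:
  assumes "X \<in> S_fam hom Obfin Obs homs U F"
  shows "\<exists>\<U>. \<U> \<subseteq> S_fam hom Obfin Obs homs U F \<and> fib F - X = \<Union>\<U>"
proof -
  obtain \<A> e where X: "X = N F e \<A>" "U \<A> \<in> Obfin" "e \<in> hom (U \<A>) F"
    using assms unfolding S_fam_def by blast
  have "{N F e \<A>' |\<A>'. \<A>' \<in> fib (U \<A>) \<and> \<A>' \<noteq> \<A>} \<subseteq> S_fam hom Obfin Obs homs U F"
    using Nbhd_in_S_fam X(2,3) by blast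
  with fibre_diff_Nbhd[OF X(3)] X(1) show ?thesis by blast
qed

end

theorem proposition5p7:
  fixes Ob :: "'o set" and hom :: "'o \<Rightarrow> 'o \<Rightarrow> 'm set" and cmp :: "'m \<Rightarrow> 'm \<Rightarrow> 'm"
    and idm :: "'o \<Rightarrow> 'm" and Obfin :: "'o set"
    and Obs :: "'p set" and homs :: "'p \<Rightarrow> 'p \<Rightarrow> 'm set" and U :: "'p \<Rightarrow> 'o" and F :: 'o
  assumes "category Ob hom cmp idm"
    and "fin_conditions Ob hom cmp Obfin"
    and "F \<in> Ob"
    and "locally_finite Ob hom cmp Obfin F"
    and "expansion Ob hom cmp idm Obs homs U"
    and "reasonable hom Obs homs U"
    and "precompact Obfin Obs U"
    and "unique_restrictions hom Obs homs U"
    and "separates_points Ob hom Obfin Obs homs U"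
  shows "\<exists>\<sigma> :: 'p topology.
           topspace \<sigma> = fibre Obs U F \<and>
           (\<forall>V. openin \<sigma> V \<longleftrightarrow> (\<exists>\<U>. \<U> \<subseteq> S_fam hom Obfin Obs homs U F \<and> V = \<Union>\<U>)) \<and>
           (\<forall>S\<in>S_fam hom Obfin Obs homs U F. openin \<sigma> S \<and> closedin \<sigma> S) \<and>
           Hausdorff_space \<sigma>"
proof -
  interpret expansion_with_restrictions Ob hom cmp idm Obs homs U
    using assms(5,8) by unfold_locales
  let ?S = "S_fam hom Obfin Obs homs U F"
  let ?\<sigma> = "base_topology ?S"
  have base: "is_topology_base ?S"
    using is_topology_base_S_fam[OF assms(4)] .
  have openin_\<sigma>: "openin ?\<sigma> V \<longleftrightarrow> (\<exists>\<U>. \<U> \<subseteq> ?S \<and> V = \<Union>\<U>)" for V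
    using openin_base_topology[OF base] .
  have topspace_\<sigma>: "topspace ?\<sigma> = fib F"
    using topspace_base_topology[OF base] Union_S_fam[OF assms(2,3)] by simp
  have "openin ?\<sigma> X \<and> closedin ?\<sigma> X" if "X \<in> ?S" for X
  proof
    show "openin ?\<sigma> X"
      using openin_base_topology_member[OF base that] .
    show "closedin ?\<sigma> X"
      unfolding closedin_def topspace_\<sigma> openin_\<sigma>
      using S_fam_subset_fibre[OF that] fibre_diff_S_fam[OF that] by blast
  qed
  moreover have "Hausdorff_space ?\<sigma>"
    by (rule Hausdorff_space_base_topology[OF base, unfolded Union_S_fam[OF assms(2,3)]])
      (rule S_fam_separates[OF assms(9,3)])
  ultimately show ?thesis
    using topspace_\<sigma> openin_\<sigma> by (intro exI[of _ ?\<sigma>] conjI allI ballI) simp_all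
qed

end
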